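(* Let $k$ be algebraically closed of characteristic zero and $q\in k^\times$ not a root of unity. Suppose $a,b\in SL_n(k((t)))$ and there is $c\in GL_n(k((t)))$ with $b=c\,a\,\sigma_q(c)^{-1}$. Then there exists $c'\in SL_n(k((t)))$ with $b=c'a\sigma_q(c')^{-1}$. In other words, the natural map from $q$-conjugacy classes in $SL_n(k((t)))$ to $q$-conjugacy classes in $GL_n(k((t)))$ is injective.
   Context: $\sigma_q$ is the $k$-automorphism $a(t)\mapsto a(qt)$ of $k((t))$, applied entrywise to matrices. A $q$-conjugacy class in a $\sigma_q$-stable subgroup $G\subseteq GL_n(k((t)))$ is an orbit of $G$ acting on itself by $g\mapsto hg\sigma_q(h)^{-1}$. *)

theory Defs
  imports "HOL-Analysis.Analysis" "HOL-Computational_Algebra.Computational_Algebra"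
begin

definition alg_closed :: "'k::field itself \<Rightarrow> bool" where
  "alg_closed _ \<longleftrightarrow> (\<forall>p :: 'k poly. degree p \<ge> 1 \<longrightarrow> (\<exists>x. poly p x = 0))"

text \<open>sigma_q on k((t)): a(t) maps to a(q t), i.e. the n-th coefficient is multiplied by q^n.\<close>
lift_definition fls_sigma :: "'k::field \<Rightarrow> 'k fls \<Rightarrow> 'k fls"
  is "\<lambda>q f n. q powi n * f n"
  by (auto elim!: eventually_mono)

definition mat_sigma :: "'k::field \<Rightarrow> 'k fls ^'n^'m \<Rightarrow> 'k fls ^'n^'m" where
  "mat_sigma q A = (\<chi> i j. fls_sigma q (A $ i $ j))"

end

theory Submission imports Defs begin

(* Write d = det c.  Taking determinants in b = c a sigma_q(c)^-1 and using
   det a = det b = 1 gives sigma_q(d) = d.  Since q is not a root of unity, the only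
   sigma_q-fixed Laurent series are the constants, so d = e for some e in k, e <> 0.
   As k is algebraically closed, e x^n = 1 for some x in k (n the matrix size).  The
   scalar matrix x I is sigma_q-fixed and central, so c' = x c twists a to the same b as c
   does, while det c' = x^n e = 1. *)

unbundle fps_syntax

lemma fls_sigma_nth [simp]: "fls_sigma q f $$ n = q powi n * f $$ n"
  by transfer simp

lemma fls_sigma_add: "fls_sigma q (f + g) = fls_sigma q f + fls_sigma q g"
  by (simp add: fls_eq_iff algebra_simps)

lemma fls_sigma_zero [simp]: "fls_sigma q 0 = 0"
  by (simp add: fls_eq_iff)

lemma fls_sigma_one [simp]: "fls_sigma q 1 = 1"
  by (simp add: fls_eq_iff)

lemma fls_sigma_const [simp]: "fls_sigma q (fls_const x) = fls_const x"
  by (simp add: fls_eq_iff)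

lemma fls_sigma_of_int [simp]: "fls_sigma q (of_int z) = of_int z"
  by (simp add: fls_of_int)

lemma fls_sigma_eq_0_iff: "(q::'k::field) \<noteq> 0 \<Longrightarrow> fls_sigma q f = 0 \<longleftrightarrow> f = 0"
  by (auto simp: fls_eq_iff)

text \<open>sigma_q rescales coefficients by nonzero factors, so it preserves the valuation;
  this is what makes the Cauchy product formula compatible with sigma_q.\<close>

lemma fls_subdegree_sigma:
  assumes "(q::'k::field) \<noteq> 0"
  shows "fls_subdegree (fls_sigma q f) = fls_subdegree f"
proof (cases "f = 0")
  case False
  then show ?thesis
    using assms nth_fls_subdegree_nonzero[of f] by (intro fls_subdegree_eqI) auto
qed simp

lemma fls_sigma_mult:
  assumes q: "(q::'k::field) \<noteq> 0"
  shows "fls_sigma q (f * g) = fls_sigma q f * fls_sigma q g"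
proof (rule fls_eqI)
  fix n
  let ?I = "{fls_subdegree f..n - fls_subdegree g}"
  have "fls_sigma q (f * g) $$ n = q powi n * (\<Sum>i\<in>?I. f $$ i * g $$ (n - i))"
    by (simp add: fls_times_nth(2))
  also have "\<dots> = (\<Sum>i\<in>?I. (q powi i * f $$ i) * (q powi (n - i) * g $$ (n - i)))"
    unfolding sum_distrib_left
    by (rule sum.cong) (use q in \<open>simp_all add: power_int_add[symmetric] algebra_simps\<close>)
  also have "\<dots> = (fls_sigma q f * fls_sigma q g) $$ n"
    by (simp add: fls_times_nth(2) fls_subdegree_sigma[OF q])
  finally show "fls_sigma q (f * g) $$ n = (fls_sigma q f * fls_sigma q g) $$ n" .
qed

lemma fls_sigma_sum: "fls_sigma q (sum f A) = (\<Sum>x\<in>A. fls_sigma q (f x))"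
  by (induction A rule: infinite_finite_induct) (auto simp: fls_sigma_add)

lemma fls_sigma_prod:
  "(q::'k::field) \<noteq> 0 \<Longrightarrow> fls_sigma q (prod f A) = (\<Prod>x\<in>A. fls_sigma q (f x))"
  by (induction A rule: infinite_finite_induct) (auto simp: fls_sigma_mult)

lemma power_int_ne_1_if_not_root_of_unity:
  assumes "(q::'k::field) \<noteq> 0" and "\<forall>m::nat. m > 0 \<longrightarrow> q ^ m \<noteq> 1" and "n \<noteq> 0"
  shows "q powi n \<noteq> 1"
proof (cases "n > 0")
  case True
  then show ?thesis using assms(2)[rule_format, of "nat n"] by (simp add: power_int_def)
next
  case False
  then have "nat (- n) > 0" using assms(3) by simp
  then show ?thesis using assms(1) assms(2)[rule_format, of "nat (- n)"] False
    by (auto simp: power_int_def field_simps)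
qed

text \<open>The fixed field of sigma_q is k: a fixed series has q^n a_n = a_n, hence a_n = 0
  for n \<noteq> 0.\<close>

lemma fls_sigma_fixed_imp_const:
  assumes "(q::'k::field) \<noteq> 0" and "\<forall>m::nat. m > 0 \<longrightarrow> q ^ m \<noteq> 1"
    and fixed: "fls_sigma q f = f"
  shows "f = fls_const (f $$ 0)"
proof -
  have "f $$ n = 0" if "n \<noteq> 0" for n
  proof -
    have "q powi n * f $$ n = f $$ n" using fixed by (metis fls_sigma_nth)
    moreover have "q powi n \<noteq> 1"
      using power_int_ne_1_if_not_root_of_unity[OF assms(1,2) that] .
    ultimately show ?thesis by (metis mult_cancel_right2)
  qed
  then show ?thesis by (auto simp: fls_eq_iff)
qed

lemma mat_sigma_mult:
  assumes "(q::'k::field) \<noteq> 0"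
  shows "mat_sigma q ((A::'k fls^'n::finite^'m) ** (B::'k fls^'p::finite^'n))
         = mat_sigma q A ** mat_sigma q B"
  by (simp add: mat_sigma_def matrix_matrix_mult_def vec_eq_iff fls_sigma_sum
      fls_sigma_mult[OF assms])

lemma mat_sigma_mat_const [simp]: "mat_sigma q (mat (fls_const x)) = mat (fls_const x)"
  by (simp add: mat_sigma_def mat_def vec_eq_iff)

lemma det_mat_sigma:
  assumes "(q::'k::field) \<noteq> 0"
  shows "det (mat_sigma q (A::'k fls^'n::finite^'n)) = fls_sigma q (det A)"
  by (simp add: det_def mat_sigma_def fls_sigma_sum fls_sigma_mult[OF assms]
      fls_sigma_prod[OF assms])

lemma invertible_mat_sigma:
  assumes "(q::'k::field) \<noteq> 0" and "invertible (A::'k fls^'n::finite^'n)"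
  shows "invertible (mat_sigma q A)"
  using assms by (simp add: invertible_det_nz det_mat_sigma fls_sigma_eq_0_iff)

lemma mat_mult_left: "mat k ** (A::'a::comm_ring_1^'p::finite^'n::finite) = (\<chi> i j. k * A $ i $ j)"
  by (simp add: matrix_matrix_mult_def mat_def vec_eq_iff if_distrib if_distribR
      cong del: if_weak_cong)

lemma mat_mult_right: "(A::'a::comm_ring_1^'n::finite^'p::finite) ** mat k = (\<chi> i j. k * A $ i $ j)"
  by (simp add: matrix_matrix_mult_def mat_def vec_eq_iff if_distrib if_distribR mult.commute
      cong del: if_weak_cong)

lemma mat_mult_commute: "mat k ** (A::'a::comm_ring_1^'n::finite^'n) = A ** mat k"
  by (simp add: mat_mult_left mat_mult_right)

lemma mat_mult_mat: "mat k ** (mat l::'a::comm_ring_1^'n::finite^'n) = mat (k * l)"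
  by (simp add: mat_mult_left) (simp add: mat_def vec_eq_iff)

lemma det_mat: "det (mat k::'a::comm_ring_1^'n::finite^'n) = k ^ CARD('n)"
  by (subst det_diagonal) (simp_all add: mat_def)

text \<open>The library's matrix_inv is a choice; for invertible A it is a two-sided inverse.\<close>

lemma matrix_inv_props:
  assumes "invertible (A::'a::semiring_1^'n::finite^'n)"
  shows "A ** matrix_inv A = mat 1" and "matrix_inv A ** A = mat 1"
  using someI_ex[OF assms[unfolded invertible_def]] by (simp_all add: matrix_inv_def)

lemma matrix_inv_unique:
  fixes A :: "'a::field^'n::finite^'n"
  assumes AX: "A ** X = mat 1"
  shows "matrix_inv A = X"
proof -
  have "invertible A" using AX invertible_right_inverse by blast
  then have "X = (matrix_inv A ** A) ** X" by (simp add: matrix_inv_props matrix_mul_lid)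
  also have "\<dots> = matrix_inv A" using AX by (simp add: matrix_mul_assoc[symmetric] matrix_mul_rid)
  finally show ?thesis by simp
qed

lemma matrix_inv_mat_mult:
  fixes A :: "'a::field^'n::finite^'n"
  assumes "invertible A" and "k \<noteq> 0"
  shows "matrix_inv (mat k ** A) = matrix_inv A ** mat (inverse k)"
proof (rule matrix_inv_unique)
  have "mat k ** A ** (matrix_inv A ** mat (inverse k))
        = mat k ** (A ** matrix_inv A) ** mat (inverse k)"
    by (simp add: matrix_mul_assoc)
  also have "\<dots> = mat 1"
    using assms by (simp add: matrix_inv_props matrix_mul_rid mat_mult_mat)
  finally show "mat k ** A ** (matrix_inv A ** mat (inverse k)) = mat 1" .
qed

text \<open>If c twists a to b and det a = det b is a unit, then det c is sigma_q-fixed, since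
  det b = det c * det a / sigma_q(det c).\<close>

lemma det_twisting_matrix_sigma_fixed:
  fixes a b c :: "'k::field fls ^'n::finite^'n"
  assumes q: "q \<noteq> 0" and "det a = det b" and "det a \<noteq> 0" and c: "invertible c"
    and b: "b = c ** a ** matrix_inv (mat_sigma q c)"
  shows "fls_sigma q (det c) = det c"
proof -
  let ?s = "mat_sigma q c"
  have "det ?s * det (matrix_inv ?s) = 1"
    using det_mul[of ?s "matrix_inv ?s"] invertible_mat_sigma[OF q c] by (simp add: matrix_inv_props)
  then have s: "fls_sigma q (det c) * det (matrix_inv ?s) = 1"
    by (simp add: det_mat_sigma[OF q])
  moreover have "det c * det (matrix_inv ?s) = 1"
    using assms(2-3) b by (simp add: det_mul)
  moreover have "det (matrix_inv ?s) \<noteq> 0"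
    using s by force
  ultimately show ?thesis by (metis mult_cancel_right)
qed

lemma twisted_conj_scalar:
  fixes a c :: "'k::field fls ^'n::finite^'n"
  assumes q: "q \<noteq> 0" and c: "invertible c" and "x \<noteq> 0"
  shows "(mat (fls_const x) ** c) ** a ** matrix_inv (mat_sigma q (mat (fls_const x) ** c))
         = c ** a ** matrix_inv (mat_sigma q c)"
proof -
  let ?X = "mat (fls_const x)" and ?Y = "mat (inverse (fls_const x))"
  have "matrix_inv (mat_sigma q (?X ** c)) = matrix_inv (mat_sigma q c) ** ?Y"
    using assms by (simp add: mat_sigma_mult matrix_inv_mat_mult invertible_mat_sigma)
  then have "(?X ** c) ** a ** matrix_inv (mat_sigma q (?X ** c))
             = ?X ** (c ** a ** matrix_inv (mat_sigma q c)) ** ?Y"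
    by (simp add: matrix_mul_assoc)
  also have "\<dots> = (c ** a ** matrix_inv (mat_sigma q c)) ** ?X ** ?Y"
    by (simp only: mat_mult_commute)
  also have "\<dots> = (c ** a ** matrix_inv (mat_sigma q c)) ** (?X ** ?Y)"
    by (simp only: matrix_mul_assoc)
  also have "\<dots> = c ** a ** matrix_inv (mat_sigma q c)"
    using assms(3) by (simp add: mat_mult_mat matrix_mul_rid)
  finally show ?thesis .
qed

lemma alg_closed_inverse_root:
  fixes e :: "'k::field"
  assumes "alg_closed TYPE('k)" and "e \<noteq> 0" and "N \<ge> 1"
  shows "\<exists>x. e * x ^ N = 1"
proof -
  have "degree (monom e N - 1) = N"
    using assms degree_add_eq_left[of "- 1" "monom e N"] by (simp add: degree_monom_eq)
  then obtain x where "poly (monom e N - 1) x = 0"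
    using assms(1,3) unfolding alg_closed_def by metis
  then show ?thesis by (auto simp: poly_monom)
qed

theorem mainTheorem3:
  fixes q :: "'k::field_char_0"
    and a b c :: "'k fls ^'n::finite^'n"
  assumes "alg_closed TYPE('k)"
    and "q \<noteq> 0"
    and "\<forall>m::nat. m > 0 \<longrightarrow> q ^ m \<noteq> 1"
    and "det a = 1" and "det b = 1"
    and "invertible c"
    and "b = c ** a ** matrix_inv (mat_sigma q c)"
  shows "\<exists>c'. det c' = 1 \<and> b = c' ** a ** matrix_inv (mat_sigma q c')"
proof -
  define e where "e = det c $$ 0"
  have "fls_sigma q (det c) = det c"
    using det_twisting_matrix_sigma_fixed[OF assms(2) _ _ assms(6,7)] assms(4,5) by simp
  then have det_c: "det c = fls_const e"
    unfolding e_def by (rule fls_sigma_fixed_imp_const[OF assms(2,3)])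
  have "e \<noteq> 0" using assms(6) det_c by (simp add: invertible_det_nz)
  then obtain x where x: "e * x ^ CARD('n) = 1"
    using alg_closed_inverse_root[OF assms(1) \<open>e \<noteq> 0\<close>, of "CARD('n)"] by (auto simp: Suc_le_eq)
  then have "x \<noteq> 0" by (cases "CARD('n)") auto
  define c' where "c' = mat (fls_const x) ** c"
  have "det c' = 1"
    using x by (simp add: c'_def det_mul det_mat det_c fls_const_power[symmetric]
        fls_const_mult_const mult.commute)
  moreover have "b = c' ** a ** matrix_inv (mat_sigma q c')"
    unfolding c'_def using assms(2,6,7) \<open>x \<noteq> 0\<close> by (simp add: twisted_conj_scalar)
  ultimately show ?thesis by blast
qed

end
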